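(* Let $W$ be a real $mn\times mn$ matrix satisfying (S), (A1), (A2), (A3) from the context, and let $\Lambda=I_n\otimes\big(\tfrac1mI_m-\tfrac1{m^2}\mathbf 1_m\mathbf 1_m^T\big)$. Then there exists an $mn\times mn$ orthogonal matrix $P=[p_1,p_2,\dots,p_{mn}]$ such that (i) $\mathrm{span}\{p_{(m-1)n+k}:1\le k\le n\}=\mathrm{span}\{\varepsilon_k\otimes\mathbf 1_m:1\le k\le n\}$; (ii) $P^TW\Lambda P=\frac1m\,\mathrm{diag}(\mu_1,\dots,\mu_{(m-1)n},0,\dots,0)$ (with $n$ trailing zeros); (iii) $P^T\Lambda P=\frac1m\,\mathrm{diag}(I_{(m-1)n},O_n)$; (iv) $P^TWP=\mathrm{diag}(\mu_1,\dots,\mu_{(m-1)n},\mu_{(m-1)n+1},\dots,\mu_{mn})$; where $\mu_1/m\ge\dots\ge\mu_{(m-1)n}/m$ are the eigenvalues of $W\Lambda$ (with multiplicity) remaining after removing $n$ copies of the eigenvalue $0$, listed in descending order, and $\mu_{(m-1)n+1}\ge\dots\ge\mu_{mn}$ are the eigenvalues of $W$ (with multiplicity) other than $\mu_1,\dots,\mu_{(m-1)n}$, in descending order.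
   Context: Let $n\ge1$, $m\ge2$. $\mathbf 1_m$ is the all-ones vector in $\mathbb{R}^m$ and $\varepsilon_k$ is the $k$-th standard basis vector of $\mathbb{R}^n$; $\otimes$ is the Kronecker product. The matrix $W$ is viewed as an $n\times n$ array of $m\times m$ blocks $W_{i,k}$, and: (S) $W_{i,i}=0$; (A1) $W$ is symmetric; (A2) $W_{i,k}\mathbf 1_m=\lambda_{ik}\mathbf 1_m$ for scalars $\lambda_{ik}$; (A3) $\lambda_{ik}=\lambda_{ki}$. *)

theory Defs
  imports "Jordan_Normal_Form.Char_Poly" "Jordan_Normal_Form.VS_Connect" "HOL-Library.Multiset"
begin

definition kron_mat :: "real mat \<Rightarrow> real mat \<Rightarrow> real mat" where
  "kron_mat A B = mat (dim_row A * dim_row B) (dim_col A * dim_col B)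
     (\<lambda>(r,s). A $$ (r div dim_row B, s div dim_col B) * B $$ (r mod dim_row B, s mod dim_col B))"

definition kron_vec :: "real vec \<Rightarrow> real vec \<Rightarrow> real vec" where
  "kron_vec u v = vec (dim_vec u * dim_vec v) (\<lambda>r. u $ (r div dim_vec v) * v $ (r mod dim_vec v))"

definition ones_vec :: "nat \<Rightarrow> real vec" where
  "ones_vec m = vec m (\<lambda>_. 1)"

definition blk :: "real mat \<Rightarrow> nat \<Rightarrow> nat \<Rightarrow> nat \<Rightarrow> real mat" where
  "blk W m i k = mat m m (\<lambda>(a,b). W $$ (i * m + a, k * m + b))"

definition diag_of :: "nat \<Rightarrow> (nat \<Rightarrow> real) \<Rightarrow> real mat" where
  "diag_of N f = mat N N (\<lambda>(i,j). if i = j then f i else 0)"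

definition eigvals_mset :: "real mat \<Rightarrow> real multiset \<Rightarrow> bool" where
  "eigvals_mset A M \<longleftrightarrow> char_poly A = (\<Prod>a\<in>#M. [:- a, 1:])"

definition Lambda_mat :: "nat \<Rightarrow> nat \<Rightarrow> real mat" where
  "Lambda_mat n m = kron_mat (1\<^sub>m n)
     ((1 / real m) \<cdot>\<^sub>m 1\<^sub>m m - (1 / (real m)^2) \<cdot>\<^sub>m mat m m (\<lambda>_. 1))"

definition vspan :: "nat \<Rightarrow> real vec set \<Rightarrow> real vec set" where
  "vspan N S = module.span (class_ring :: real ring) (module_vec TYPE(real) N) S"

end

(*
  Let h_0, ..., h_(m-1) be an orthonormal basis of R^m with h_(m-1) = 1_m / sqrt m, and use the
  orthonormal basis e_k (x) h_j of R^(mn). Lambda acts on every block as the centering matrix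
  (1/m) I_m - (1/m^2) 1_m 1_m^T, which kills h_(m-1) and is 1/m on its orthogonal complement;
  so in this basis Lambda = (1/m) diag(I_((m-1)n), O_n). By (A2) every block W_ik has h_(m-1)
  as an eigenvector, so the span of the e_k (x) 1_m is W-invariant and, W being symmetric,
  W becomes block diagonal diag(A, B). Diagonalizing A and B by orthogonal matrices, with
  the eigenvalues sorted decreasingly, does not change the form of Lambda and yields P.
  Then P^T W Lambda P = (P^T W P)(P^T Lambda P), and orthogonal similarity preserves
  characteristic polynomials, which gives the eigenvalue descriptions.
*)

theory Submission
  imports Defs "HOL-Combinatorics.Permutations"
begin

definition orthonormal_mat :: "nat \<Rightarrow> 'a :: comm_ring_1 mat \<Rightarrow> bool" where
  "orthonormal_mat n Q \<longleftrightarrow> Q \<in> carrier_mat n n \<and> transpose_mat Q * Q = 1\<^sub>m n"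

lemma orthonormal_mat_carrier: "orthonormal_mat n Q \<Longrightarrow> Q \<in> carrier_mat n n"
  unfolding orthonormal_mat_def by simp

lemma orthonormal_mat_transpose_mult: "orthonormal_mat n Q \<Longrightarrow> transpose_mat Q * Q = 1\<^sub>m n"
  unfolding orthonormal_mat_def by simp

lemma orthonormal_mat_mult_transpose:
  fixes Q :: "'a :: field mat"
  shows "orthonormal_mat n Q \<Longrightarrow> Q * transpose_mat Q = 1\<^sub>m n"
  unfolding orthonormal_mat_def by (auto intro: mat_mult_left_right_inverse)

lemma orthonormal_mat_one: "orthonormal_mat n (1\<^sub>m n)"
  unfolding orthonormal_mat_def by simp

lemma orthonormal_matI_cols:
  assumes "Q \<in> carrier_mat n n"
    and "\<And>i j. i < n \<Longrightarrow> j < n \<Longrightarrow> col Q i \<bullet> col Q j = (if i = j then 1 else 0)"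
  shows "orthonormal_mat n Q"
  unfolding orthonormal_mat_def using assms by (auto intro!: eq_matI)

lemma orthonormal_mat_col_scalar_prod:
  assumes "orthonormal_mat n Q" and "i < n" "j < n"
  shows "col Q i \<bullet> col Q j = (if i = j then 1 else 0)"
proof -
  have "Q \<in> carrier_mat n n" using assms(1) by (rule orthonormal_mat_carrier)
  then have "(transpose_mat Q * Q) $$ (i, j) = col Q i \<bullet> col Q j"
    using assms by simp
  then show ?thesis using assms by (simp add: orthonormal_mat_transpose_mult)
qed

lemma orthonormal_mat_mult:
  assumes P: "orthonormal_mat n P" and Q: "orthonormal_mat n Q"
  shows "orthonormal_mat n (P * Q)"
proof -
  have Pc: "P \<in> carrier_mat n n" and Qc: "Q \<in> carrier_mat n n"
    using P Q by (simp_all add: orthonormal_mat_carrier)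
  have "transpose_mat (P * Q) * (P * Q) = transpose_mat Q * (transpose_mat P * P) * Q"
    using Pc Qc by (simp add: transpose_mult[OF Pc Qc] assoc_mult_mat[of _ n n _ n _ n])
  also have "\<dots> = 1\<^sub>m n"
    using Qc by (simp add: orthonormal_mat_transpose_mult[OF P] orthonormal_mat_transpose_mult[OF Q])
  finally show ?thesis using Pc Qc unfolding orthonormal_mat_def by simp
qed

lemma transpose_mult_mult_index:
  fixes X M :: "'a :: comm_semiring_0 mat"
  assumes X: "X \<in> carrier_mat nr nc" and M: "M \<in> carrier_mat nr nr" and s: "s < nc" and t: "t < nc"
  shows "(transpose_mat X * M * X) $$ (s, t) = col X s \<bullet> (M *\<^sub>v col X t)"
proof -
  have "transpose_mat X * M * X = transpose_mat X * (M * X)"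
    using X M by (simp add: assoc_mult_mat[of _ nc nr _ nr _ nc])
  also have "\<dots> $$ (s, t) = row (transpose_mat X) s \<bullet> col (M * X) t"
    using X M s t by (intro index_mult_mat(1)) simp_all
  finally show ?thesis
    using X s by (simp add: col_mult2[OF M X t])
qed

lemma transpose_mult_mult_symmetric:
  fixes X M :: "'a :: comm_semiring_0 mat"
  assumes X: "X \<in> carrier_mat nr nc" and M: "M \<in> carrier_mat nr nr" and "transpose_mat M = M"
  shows "transpose_mat (transpose_mat X * M * X) = transpose_mat X * M * X"
proof -
  have "transpose_mat (transpose_mat X * M * X) = transpose_mat X * transpose_mat (transpose_mat X * M)"
    using X M by (intro transpose_mult[of _ nc nr]) auto
  also have "transpose_mat (transpose_mat X * M) = M * X"
    using assms by (subst transpose_mult[of _ nc nr]) auto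
  finally show ?thesis using X M by simp
qed

lemma transpose_mult_mult_mult:
  fixes P Q X :: "'a :: comm_semiring_0 mat"
  assumes "P \<in> carrier_mat n n" "Q \<in> carrier_mat n n" "X \<in> carrier_mat n n"
  shows "transpose_mat (P * Q) * X * (P * Q) = transpose_mat Q * (transpose_mat P * X * P) * Q"
  using assms by (simp add: transpose_mult[of _ n n] assoc_mult_mat[of _ n n _ n _ n])

lemma smult_mat_mult_vec:
  fixes A :: "'a :: comm_semiring_0 mat"
  assumes "dim_col A = dim_vec v"
  shows "(c \<cdot>\<^sub>m A) *\<^sub>v v = c \<cdot>\<^sub>v (A *\<^sub>v v)"
  using assms by (intro eq_vecI) (simp_all add: row_def scalar_prod_def sum_distrib_left mult.assoc)

lemma orthonormal_conj_mult:
  fixes P X Y :: "'a :: field mat"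
  assumes P: "orthonormal_mat n P" and X: "X \<in> carrier_mat n n" and Y: "Y \<in> carrier_mat n n"
  shows "transpose_mat P * (X * Y) * P = (transpose_mat P * X * P) * (transpose_mat P * Y * P)"
proof -
  have Pc: "P \<in> carrier_mat n n" using P by (rule orthonormal_mat_carrier)
  have "transpose_mat P * (X * Y) * P = transpose_mat P * X * (P * transpose_mat P) * Y * P"
    using Pc X Y by (simp add: orthonormal_mat_mult_transpose[OF P] assoc_mult_mat[of _ n n _ n _ n])
  also have "\<dots> = (transpose_mat P * X * P) * (transpose_mat P * Y * P)"
    using Pc X Y by (simp add: assoc_mult_mat[of _ n n _ n _ n])
  finally show ?thesis .
qed

lemma char_poly_orthonormal_conj:
  fixes P X :: "'a :: field mat"
  assumes P: "orthonormal_mat n P" and X: "X \<in> carrier_mat n n"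
  shows "char_poly (transpose_mat P * X * P) = char_poly X"
proof -
  have Pc: "P \<in> carrier_mat n n" using P by (rule orthonormal_mat_carrier)
  have "P * (transpose_mat P * X * P) * transpose_mat P
      = (P * transpose_mat P) * X * (P * transpose_mat P)"
    using Pc X by (simp add: assoc_mult_mat[of _ n n _ n _ n])
  then have "X = P * (transpose_mat P * X * P) * transpose_mat P"
    using X by (simp add: orthonormal_mat_mult_transpose[OF P])
  then have "similar_mat X (transpose_mat P * X * P)"
    using Pc X orthonormal_mat_transpose_mult[OF P] orthonormal_mat_mult_transpose[OF P]
    by (intro similar_matI[of _ _ _ _ n]) auto
  then show ?thesis by (simp add: char_poly_similar)
qed

lemma diag_of_carrier [simp]: "diag_of n f \<in> carrier_mat n n"
  unfolding diag_of_def by simp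

lemma diag_of_mult: "diag_of n f * diag_of n g = diag_of n (\<lambda>i. f i * g i)"
proof (rule eq_matI)
  fix i j assume "i < dim_row (diag_of n (\<lambda>i. f i * g i))" "j < dim_col (diag_of n (\<lambda>i. f i * g i))"
  then have ij: "i < n" "j < n" by (simp_all add: diag_of_def)
  have "(diag_of n f * diag_of n g) $$ (i, j)
      = (\<Sum>k\<in>{0..<n}. (if i = k then f i else 0) * (if k = j then g k else 0))"
    using ij by (simp add: diag_of_def scalar_prod_def)
  also have "\<dots> = (\<Sum>k\<in>{0..<n}. if k = i then (if i = j then f i * g i else 0) else 0)"
    by (rule sum.cong) auto
  finally show "(diag_of n f * diag_of n g) $$ (i, j) = diag_of n (\<lambda>i. f i * g i) $$ (i, j)"
    using ij by (simp add: diag_of_def)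
qed (simp_all add: diag_of_def)

lemma char_poly_diag_of:
  "char_poly (diag_of n f) = (\<Prod>a\<in>#image_mset f (mset_set {..<n}). [:- a, 1:])"
proof -
  have "upper_triangular (diag_of n f)"
    unfolding upper_triangular_def diag_of_def by auto
  moreover have "diag_mat (diag_of n f) = map f [0..<n]"
    unfolding diag_mat_def diag_of_def by (rule nth_equalityI) auto
  ultimately have "char_poly (diag_of n f) = (\<Prod>i\<leftarrow>[0..<n]. [:- f i, 1:])"
    using char_poly_upper_triangular[OF diag_of_carrier] by (simp add: o_def)
  also have "\<dots> = (\<Prod>i<n. [:- f i, 1:])"
    by (subst prod.distinct_set_conv_list[symmetric]) (simp_all add: atLeast0LessThan)
  finally show ?thesis
    by (simp add: prod_unfold_prod_mset multiset.map_comp o_def)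
qed

lemma eigvals_mset_orthonormal_conj_diag_of:
  assumes P: "orthonormal_mat n P" and X: "X \<in> carrier_mat n n"
    and "transpose_mat P * X * P = diag_of n f"
  shows "eigvals_mset X (image_mset f (mset_set {..<n}))"
  using assms char_poly_orthonormal_conj[OF P X]
  unfolding eigvals_mset_def by (simp add: char_poly_diag_of)

lemma image_mset_lessThan_add_zeros:
  "image_mset (\<lambda>i. if i < k then f i else 0) (mset_set {..<k + l})
    = image_mset f (mset_set {..<k}) + replicate_mset l 0"
proof -
  let ?g = "\<lambda>i. if i < k then f i else 0"
  have "mset_set {..<k + l} = mset_set ({..<k} \<union> {k..<k + l})"
    by (rule arg_cong[where f = mset_set]) auto
  also have "\<dots> = mset_set {..<k} + mset_set {k..<k + l}"
    by (rule mset_set_Union) auto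
  finally have "image_mset ?g (mset_set {..<k + l})
      = image_mset ?g (mset_set {..<k}) + image_mset ?g (mset_set {k..<k + l})"
    by simp
  also have "image_mset ?g (mset_set {..<k}) = image_mset f (mset_set {..<k})"
    by (rule image_mset_cong) simp
  also have "image_mset ?g (mset_set {k..<k + l}) = image_mset (\<lambda>_. 0) (mset_set {k..<k + l})"
    by (rule image_mset_cong) simp
  finally show ?thesis
    by (simp add: image_mset_const_eq)
qed

definition block_diag_mat :: "'a :: zero mat \<Rightarrow> 'a mat \<Rightarrow> 'a mat" where
  "block_diag_mat A D =
     four_block_mat A (0\<^sub>m (dim_row A) (dim_col D)) (0\<^sub>m (dim_row D) (dim_col A)) D"

lemma block_diag_mat_carrier:
  "A \<in> carrier_mat k k \<Longrightarrow> D \<in> carrier_mat l l \<Longrightarrow> block_diag_mat A D \<in> carrier_mat (k + l) (k + l)"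
  unfolding block_diag_mat_def by auto

lemma block_diag_mat_mult:
  fixes A B C D :: "'a :: semiring_0 mat"
  assumes "A \<in> carrier_mat k k" "B \<in> carrier_mat k k" "C \<in> carrier_mat l l" "D \<in> carrier_mat l l"
  shows "block_diag_mat A C * block_diag_mat B D = block_diag_mat (A * B) (C * D)"
  unfolding block_diag_mat_def using assms
  by (subst mult_four_block_mat[of _ k k _ l _ l _ _ k _ l]) auto

lemma block_diag_mat_transpose:
  assumes "A \<in> carrier_mat k k" "D \<in> carrier_mat l l"
  shows "transpose_mat (block_diag_mat A D) = block_diag_mat (transpose_mat A) (transpose_mat D)"
  unfolding block_diag_mat_def using assms by (subst transpose_four_block_mat) auto

lemma block_diag_mat_one: "block_diag_mat (1\<^sub>m k) (1\<^sub>m l) = 1\<^sub>m (k + l)"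
  unfolding block_diag_mat_def by simp

lemma orthonormal_block_diag_mat:
  fixes Q1 Q2 :: "'a :: comm_ring_1 mat"
  assumes "orthonormal_mat k Q1" "orthonormal_mat l Q2"
  shows "orthonormal_mat (k + l) (block_diag_mat Q1 Q2)"
proof -
  have Q1: "Q1 \<in> carrier_mat k k" and Q2: "Q2 \<in> carrier_mat l l"
    using assms by (simp_all add: orthonormal_mat_carrier)
  have "transpose_mat (block_diag_mat Q1 Q2) * block_diag_mat Q1 Q2
      = block_diag_mat (transpose_mat Q1 * Q1) (transpose_mat Q2 * Q2)"
    using Q1 Q2 by (simp add: block_diag_mat_transpose block_diag_mat_mult)
  then show ?thesis
    using assms Q1 Q2 unfolding orthonormal_mat_def
    by (simp add: block_diag_mat_carrier block_diag_mat_one)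
qed

lemma block_diag_mat_conj:
  fixes Q1 Q2 A D :: "'a :: comm_ring_1 mat"
  assumes "Q1 \<in> carrier_mat k k" "Q2 \<in> carrier_mat l l" "A \<in> carrier_mat k k" "D \<in> carrier_mat l l"
  shows "transpose_mat (block_diag_mat Q1 Q2) * block_diag_mat A D * block_diag_mat Q1 Q2
    = block_diag_mat (transpose_mat Q1 * A * Q1) (transpose_mat Q2 * D * Q2)"
proof -
  have "transpose_mat (block_diag_mat Q1 Q2) * block_diag_mat A D
      = block_diag_mat (transpose_mat Q1 * A) (transpose_mat Q2 * D)"
    using assms by (simp add: block_diag_mat_transpose block_diag_mat_mult)
  then show ?thesis
    using assms by (simp add: block_diag_mat_mult[of "transpose_mat Q1 * A" k _ "transpose_mat Q2 * D" l])
qed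

lemma block_diag_mat_diag_of:
  "block_diag_mat (diag_of k f) (diag_of l g) = diag_of (k + l) (\<lambda>i. if i < k then f i else g (i - k))"
  by (rule eq_matI) (auto simp: block_diag_mat_def diag_of_def)

lemma orthonormal_block_diag_mat_conj_first_coords:
  fixes Q1 Q2 :: "real mat"
  assumes Q1: "orthonormal_mat k Q1" and Q2: "Q2 \<in> carrier_mat l l"
  shows "transpose_mat (block_diag_mat Q1 Q2) * diag_of (k + l) (\<lambda>i. if i < k then 1 else 0) * block_diag_mat Q1 Q2
    = diag_of (k + l) (\<lambda>i. if i < k then 1 else 0)"
proof -
  have Q1c: "Q1 \<in> carrier_mat k k" using Q1 by (rule orthonormal_mat_carrier)
  have D: "diag_of (k + l) (\<lambda>i. if i < k then 1 else 0) = block_diag_mat (1\<^sub>m k) (0\<^sub>m l l)"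
    by (rule eq_matI) (auto simp: block_diag_mat_def diag_of_def)
  show ?thesis
    unfolding D using Q1c Q2
    by (simp add: block_diag_mat_conj orthonormal_mat_transpose_mult[OF Q1])
qed

lemma symmetric_mat_block_diag_split:
  fixes M :: "'a :: zero mat"
  assumes M: "M \<in> carrier_mat (k + l) (k + l)" and sym: "transpose_mat M = M"
    and zero: "\<And>i j. i < k \<Longrightarrow> k \<le> j \<Longrightarrow> j < k + l \<Longrightarrow> M $$ (i, j) = 0"
  shows "\<exists>A B. A \<in> carrier_mat k k \<and> B \<in> carrier_mat l l \<and> transpose_mat A = A \<and> transpose_mat B = B \<and>
    M = block_diag_mat A B"
proof -
  have Mij: "M $$ (i, j) = M $$ (j, i)" if "i < k + l" "j < k + l" for i j
    using M that by (metis carrier_matD index_transpose_mat(1) sym)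
  define A where "A = mat k k (\<lambda>(i, j). M $$ (i, j))"
  define B where "B = mat l l (\<lambda>(i, j). M $$ (k + i, k + j))"
  have "M = block_diag_mat A B"
  proof (rule eq_matI)
    fix i j assume "i < dim_row (block_diag_mat A B)" "j < dim_col (block_diag_mat A B)"
    then have ij: "i < k + l" "j < k + l" by (simp_all add: block_diag_mat_def A_def B_def)
    then show "M $$ (i, j) = block_diag_mat A B $$ (i, j)"
      using zero[of i j] zero[of j i] Mij[OF ij] by (auto simp: block_diag_mat_def A_def B_def)
  qed (use M in \<open>simp_all add: block_diag_mat_def A_def B_def\<close>)
  moreover have "transpose_mat A = A" "transpose_mat B = B"
    by (auto intro!: eq_matI simp: A_def B_def Mij)
  ultimately show ?thesis
    by (intro exI[of _ A] exI[of _ B]) (simp add: A_def B_def)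
qed

lemma sum_lessThan_add: "(\<Sum>s<k + l. f s) = (\<Sum>s<k. f s) + (\<Sum>i<l. f (k + i :: nat))"
  by (induction l) (simp_all add: add.assoc)

lemma col_mult_block_diag_mat_right:
  fixes A Q1 Q2 :: "'a :: comm_semiring_1 mat"
  assumes A: "A \<in> carrier_mat N (k + l)" and Q1: "Q1 \<in> carrier_mat k k" and Q2: "Q2 \<in> carrier_mat l l"
    and j: "j < l"
  shows "col (A * block_diag_mat Q1 Q2) (k + j) = mat N l (\<lambda>(r, i). A $$ (r, k + i)) *\<^sub>v col Q2 j"
proof (rule eq_vecI)
  fix r assume "r < dim_vec (mat N l (\<lambda>(r, i). A $$ (r, k + i)) *\<^sub>v col Q2 j)"
  then have r: "r < N" by simp
  have "col (A * block_diag_mat Q1 Q2) (k + j) $ r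
      = (\<Sum>s<k + l. A $$ (r, s) * block_diag_mat Q1 Q2 $$ (s, k + j))"
    using A Q1 Q2 r j by (simp add: block_diag_mat_def scalar_prod_def atLeast0LessThan)
  also have "\<dots> = (\<Sum>i<l. A $$ (r, k + i) * Q2 $$ (i, j))"
    using Q1 Q2 j by (simp add: sum_lessThan_add block_diag_mat_def)
  also have "\<dots> = (mat N l (\<lambda>(r, i). A $$ (r, k + i)) *\<^sub>v col Q2 j) $ r"
    using Q2 r j by (simp add: scalar_prod_def atLeast0LessThan)
  finally show "col (A * block_diag_mat Q1 Q2) (k + j) $ r = (mat N l (\<lambda>(r, i). A $$ (r, k + i)) *\<^sub>v col Q2 j) $ r" .
qed (use A Q1 Q2 in \<open>simp add: block_diag_mat_def\<close>)

section \<open>The spectral theorem for real symmetric matrices\<close>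

lemma conjugate_of_real_mat_mult_vec:
  assumes A: "A \<in> carrier_mat n n" and v: "v \<in> carrier_vec n"
  shows "conjugate (map_mat complex_of_real A *\<^sub>v v) = map_mat complex_of_real A *\<^sub>v conjugate v"
proof (rule eq_vecI)
  fix i assume "i < dim_vec (map_mat complex_of_real A *\<^sub>v conjugate v)"
  then have i: "i < n" using A by simp
  show "conjugate (map_mat complex_of_real A *\<^sub>v v) $ i = (map_mat complex_of_real A *\<^sub>v conjugate v) $ i"
    using i A v by (simp add: scalar_prod_def)
qed (use A in simp)

lemma eigenvalue_of_real_symmetric_is_real:
  fixes A :: "real mat"
  assumes A: "A \<in> carrier_mat n n" and sym: "transpose_mat A = A"
    and a: "eigenvalue (map_mat complex_of_real A) a"
  shows "cnj a = a"
proof -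
  define Ac where "Ac = map_mat complex_of_real A"
  have Ac: "Ac \<in> carrier_mat n n" and symAc: "transpose_mat Ac = Ac"
    unfolding Ac_def using A by (simp_all add: map_mat_transpose sym)
  obtain v where v: "v \<in> carrier_vec n" and "v \<noteq> 0\<^sub>v n" and Av: "Ac *\<^sub>v v = a \<cdot>\<^sub>v v"
    using a Ac unfolding Ac_def eigenvalue_def eigenvector_def by auto
  have "a * (v \<bullet>c v) = (Ac *\<^sub>v v) \<bullet> conjugate v"
    using v by (simp add: Av)
  also have "\<dots> = v \<bullet> (Ac *\<^sub>v conjugate v)"
    using transpose_vec_mult_scalar[OF Ac, of "conjugate v" v] v by (simp add: symAc)
  also have "\<dots> = v \<bullet> conjugate (a \<cdot>\<^sub>v v)"
    using conjugate_of_real_mat_mult_vec[OF A v] by (simp add: Ac_def[symmetric] Av)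
  also have "\<dots> = cnj a * (v \<bullet>c v)"
    using v by (simp add: conjugate_smult_vec)
  finally show ?thesis
    using v \<open>v \<noteq> 0\<^sub>v n\<close> by simp
qed

lemma real_symmetric_has_eigenvalue:
  fixes A :: "real mat"
  assumes A: "A \<in> carrier_mat n n" and sym: "transpose_mat A = A" and "n > 0"
  shows "\<exists>e. eigenvalue A e"
proof -
  define Ac where "Ac = map_mat complex_of_real A"
  have Ac: "Ac \<in> carrier_mat n n" unfolding Ac_def using A by simp
  obtain as where cp: "char_poly Ac = (\<Prod>a\<leftarrow>as. [:- a, 1:])" and "length as = n"
    using char_poly_factorized[OF Ac] by blast
  with \<open>n > 0\<close> obtain a rest where "as = a # rest" by (cases as) auto
  then have "eigenvalue Ac a"
    using cp eigenvalue_root_char_poly[OF Ac] by simp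
  then have "a \<in> \<real>"
    using eigenvalue_of_real_symmetric_is_real[OF A sym] unfolding Ac_def
    by (simp add: Reals_cnj_iff)
  then have a: "a = complex_of_real (Re a)"
    by (simp add: of_real_Re)
  have "complex_of_real (poly (char_poly A) (Re a)) = poly (char_poly Ac) a"
    unfolding Ac_def of_real_hom.char_poly_hom[OF A] by (subst a) simp
  also have "\<dots> = 0"
    using \<open>eigenvalue Ac a\<close> eigenvalue_root_char_poly[OF Ac] by simp
  finally show ?thesis
    using eigenvalue_root_char_poly[OF A] by auto
qed

lemma orthonormal_mat_with_col:
  fixes u :: "real vec"
  assumes u: "u \<in> carrier_vec n" and uu: "u \<bullet> u = 1" and j: "j < n"
  shows "\<exists>H. orthonormal_mat n H \<and> col H j = u"
proof (cases "u = unit_vec n j")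
  case True
  then show ?thesis
    using j by (intro exI[of _ "1\<^sub>m n"]) (simp add: orthonormal_mat_one)
next
  case False
  define w where "w = u - unit_vec n j"
  have w: "w \<in> carrier_vec n" unfolding w_def using u by simp
  have "u = w + unit_vec n j"
    unfolding w_def using u by (auto intro!: eq_vecI)
  with False have "w \<noteq> 0\<^sub>v n" by auto
  then have "w \<bullet> w \<noteq> 0" using conjugate_square_eq_0_vec[OF w] by simp
  have ww: "w \<bullet> w = - 2 * w $ j"
    using u uu j unfolding w_def
    by (simp add: minus_scalar_prod_distrib[of _ n] scalar_prod_minus_distrib[of _ n])
  define a where "a = 2 / (w \<bullet> w)"
  have aww: "a * (w \<bullet> w) = 2"
    unfolding a_def using \<open>w \<bullet> w \<noteq> 0\<close> by simp
  \<comment> \<open>the Householder reflection in w, which maps e_j to u\<close>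
  define H where "H = mat n n (\<lambda>(i, k). unit_vec n k $ i - a * w $ k * w $ i)"
  have colH: "col H k = unit_vec n k - (a * w $ k) \<cdot>\<^sub>v w" if "k < n" for k
    using that w unfolding H_def by (auto intro!: eq_vecI)
  have orthonormal: "orthonormal_mat n H"
  proof (rule orthonormal_matI_cols)
    fix i k assume ik: "i < n" "k < n"
    have "col H i \<bullet> col H k = (if i = k then 1 else 0)
        - a * w $ i * w $ k - a * w $ k * w $ i + (a * w $ i) * (a * w $ k) * (w \<bullet> w)"
      using ik w unfolding colH[OF ik(1)] colH[OF ik(2)]
      by (simp add: minus_scalar_prod_distrib[of _ n] scalar_prod_minus_distrib[of _ n] algebra_simps)
    also have "(a * w $ i) * (a * w $ k) * (w \<bullet> w) = (a * (w \<bullet> w)) * (a * w $ i * w $ k)"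
      by (simp only: mult_ac)
    finally show "col H i \<bullet> col H k = (if i = k then 1 else 0)"
      unfolding aww by (simp add: algebra_simps)
  qed (simp add: H_def)
  have "a * w $ j = -1"
    unfolding a_def ww using \<open>w \<bullet> w \<noteq> 0\<close> ww by simp
  then have "col H j = u"
    using j w u unfolding colH[OF j] w_def by (auto intro!: eq_vecI)
  with orthonormal show ?thesis by blast
qed

lemma real_symmetric_deflation:
  fixes A :: "real mat"
  assumes A: "A \<in> carrier_mat (Suc n) (Suc n)" and sym: "transpose_mat A = A"
  shows "\<exists>H e B. orthonormal_mat (Suc n) H \<and> B \<in> carrier_mat n n \<and> transpose_mat B = B \<and>
    transpose_mat H * A * H = block_diag_mat (diag_of 1 (\<lambda>_. e)) B"
proof -
  obtain e v where v: "v \<in> carrier_vec (Suc n)" "v \<noteq> 0\<^sub>v (Suc n)" and Av: "A *\<^sub>v v = e \<cdot>\<^sub>v v"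
    using real_symmetric_has_eigenvalue[OF A sym] A
    unfolding eigenvalue_def eigenvector_def by auto
  have "v \<bullet> v > 0"
    using conjugate_square_greater_0_vec[OF v(1)] v(2) by simp
  define u where "u = (1 / sqrt (v \<bullet> v)) \<cdot>\<^sub>v v"
  have u: "u \<in> carrier_vec (Suc n)" and "u \<bullet> u = 1" and Au: "A *\<^sub>v u = e \<cdot>\<^sub>v u"
    unfolding u_def using v A Av \<open>v \<bullet> v > 0\<close>
    by (simp_all add: mult_mat_vec smult_smult_assoc mult.commute)
  obtain H where H: "orthonormal_mat (Suc n) H" and Hu: "col H 0 = u"
    using orthonormal_mat_with_col[OF u \<open>u \<bullet> u = 1\<close>] by blast
  have Hc: "H \<in> carrier_mat (Suc n) (Suc n)" using H by (rule orthonormal_mat_carrier)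
  define A' where "A' = transpose_mat H * A * H"
  have A': "A' \<in> carrier_mat (Suc n) (Suc n)" unfolding A'_def using Hc A by simp
  have "transpose_mat A' = A'"
    unfolding A'_def by (rule transpose_mult_mult_symmetric[OF Hc A sym])
  then have symA': "A' $$ (i, j) = A' $$ (j, i)" if "i < Suc n" "j < Suc n" for i j
    using A' that by (metis carrier_matD index_transpose_mat(1))
  \<comment> \<open>H e_0 = u is an eigenvector, so A' e_0 = e e_0\<close>
  have A'_col0: "A' $$ (i, 0) = (if i = 0 then e else 0)" if "i < Suc n" for i
    using that Hc A u unfolding A'_def transpose_mult_mult_index[OF Hc A that zero_less_Suc] Hu Au
    by (simp add: Hu[symmetric] orthonormal_mat_col_scalar_prod[OF H])
  define B where "B = mat n n (\<lambda>(i, j). A' $$ (Suc i, Suc j))"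
  have "A' = block_diag_mat (diag_of 1 (\<lambda>_. e)) B"
  proof (rule eq_matI)
    fix i j assume "i < dim_row (block_diag_mat (diag_of 1 (\<lambda>_. e)) B)"
      "j < dim_col (block_diag_mat (diag_of 1 (\<lambda>_. e)) B)"
    then have ij: "i < Suc n" "j < Suc n" by (simp_all add: block_diag_mat_def diag_of_def B_def)
    show "A' $$ (i, j) = block_diag_mat (diag_of 1 (\<lambda>_. e)) B $$ (i, j)"
    proof (cases "j = 0")
      case True
      then show ?thesis using ij A'_col0 by (simp add: block_diag_mat_def diag_of_def B_def)
    next
      case False
      then show ?thesis using ij symA'[OF ij] A'_col0[OF ij(2)]
        by (cases i) (simp_all add: block_diag_mat_def diag_of_def B_def)
    qed
  qed (use A' in \<open>simp_all add: block_diag_mat_def diag_of_def B_def\<close>)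
  moreover have "transpose_mat B = B"
    by (rule eq_matI) (auto simp: B_def symA')
  ultimately show ?thesis
    using H unfolding A'_def by (intro exI[of _ H] exI[of _ e] exI[of _ B]) (simp add: B_def)
qed

theorem real_symmetric_orthogonally_diagonalizable:
  fixes A :: "real mat"
  assumes "A \<in> carrier_mat n n" and "transpose_mat A = A"
  shows "\<exists>Q d. orthonormal_mat n Q \<and> transpose_mat Q * A * Q = diag_of n d"
  using assms
proof (induction n arbitrary: A)
  case 0
  then show ?case
    by (intro exI[of _ "1\<^sub>m 0"] exI[of _ "\<lambda>_. 0"]) (auto simp: orthonormal_mat_one diag_of_def)
next
  case (Suc n)
  obtain H e B where H: "orthonormal_mat (Suc n) H" and B: "B \<in> carrier_mat n n"
    and "transpose_mat B = B" and HAH: "transpose_mat H * A * H = block_diag_mat (diag_of 1 (\<lambda>_. e)) B"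
    using real_symmetric_deflation[OF Suc.prems] by blast
  obtain Q' d where Q': "orthonormal_mat n Q'" and QBQ: "transpose_mat Q' * B * Q' = diag_of n d"
    using Suc.IH[OF B \<open>transpose_mat B = B\<close>] by blast
  define R where "R = block_diag_mat (1\<^sub>m 1) Q'"
  have R: "orthonormal_mat (Suc n) R"
    unfolding R_def using orthonormal_block_diag_mat[OF orthonormal_mat_one[of 1] Q'] by simp
  have "transpose_mat (H * R) * A * (H * R) = transpose_mat R * (transpose_mat H * A * H) * R"
    using orthonormal_mat_carrier[OF H] orthonormal_mat_carrier[OF R] Suc.prems(1)
    by (rule transpose_mult_mult_mult)
  also have "\<dots> = block_diag_mat (transpose_mat (1\<^sub>m 1) * diag_of 1 (\<lambda>_. e) * 1\<^sub>m 1)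
      (transpose_mat Q' * B * Q')"
    unfolding HAH R_def
    by (rule block_diag_mat_conj[where k = 1])
      (use Q' B in \<open>simp_all add: orthonormal_mat_carrier\<close>)
  also have "\<dots> = block_diag_mat (diag_of 1 (\<lambda>_. e)) (diag_of n d)"
    by (simp add: QBQ left_mult_one_mat[of _ "Suc 0" "Suc 0"] right_mult_one_mat[of _ "Suc 0" "Suc 0"])
  also have "\<dots> = diag_of (Suc n) (\<lambda>i. if i < 1 then e else d (i - 1))"
    using block_diag_mat_diag_of[of 1 "\<lambda>_. e" n d] by simp
  finally show ?case
    using orthonormal_mat_mult[OF H R] by blast
qed

lemma permutes_sorting_descending:
  fixes f :: "nat \<Rightarrow> 'a :: linorder"
  shows "\<exists>p. p permutes {..<n} \<and> (\<forall>i j. i \<le> j \<and> j < n \<longrightarrow> f (p j) \<le> f (p i))"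
proof -
  define xs where "xs = map f [0..<n]"
  have "mset (rev (sort xs)) = mset xs" by simp
  then obtain p where p: "p permutes {..<length xs}" and pxs: "permute_list p xs = rev (sort xs)"
    using mset_eq_permutation by metis
  have "p permutes {..<n}" using p unfolding xs_def by simp
  then have fp: "f (p i) = rev (sort xs) ! i" if "i < n" for i
    using that p permutes_in_image[OF p] unfolding pxs[symmetric]
    by (simp add: permute_list_nth xs_def)
  have "f (p j) \<le> f (p i)" if "i \<le> j" "j < n" for i j
    using that sorted_nth_mono[OF sorted_sort, of "n - Suc j" "n - Suc i" xs]
    by (simp add: fp rev_nth xs_def)
  then show ?thesis using \<open>p permutes {..<n}\<close> by blast
qed

definition perm_mat :: "nat \<Rightarrow> (nat \<Rightarrow> nat) \<Rightarrow> 'a :: {zero, one} mat" where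
  "perm_mat n p = mat n n (\<lambda>(i, j). if i = p j then 1 else 0)"

lemma col_perm_mat:
  assumes "p permutes {..<n}" "j < n"
  shows "col (perm_mat n p) j = unit_vec n (p j)"
  using assms by (auto intro!: eq_vecI simp: perm_mat_def unit_vec_def)

lemma orthonormal_perm_mat:
  assumes p: "p permutes {..<n}"
  shows "orthonormal_mat n (perm_mat n p :: 'a :: comm_ring_1 mat)"
proof (rule orthonormal_matI_cols)
  fix i j assume "i < n" "j < n"
  then show "col (perm_mat n p) i \<bullet> col (perm_mat n p) j = (if i = j then 1 else (0 :: 'a))"
    using permutes_in_image[OF p] permutes_inj[OF p]
    by (simp add: col_perm_mat[OF p] inj_eq)
qed (simp add: perm_mat_def)

lemma perm_mat_conj_index:
  fixes X :: "'a :: comm_ring_1 mat"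
  assumes p: "p permutes {..<n}" and X: "X \<in> carrier_mat n n" and i: "i < n" and j: "j < n"
  shows "(transpose_mat (perm_mat n p) * X * perm_mat n p) $$ (i, j) = X $$ (p i, p j)"
proof -
  have P: "perm_mat n p \<in> carrier_mat n n" by (simp add: perm_mat_def)
  show ?thesis
    unfolding transpose_mult_mult_index[OF P X i j] col_perm_mat[OF p i] col_perm_mat[OF p j]
    using X permutes_in_image[OF p] i j by simp
qed

theorem real_symmetric_orthogonally_diagonalizable_sorted:
  fixes A :: "real mat"
  assumes A: "A \<in> carrier_mat n n" and "transpose_mat A = A"
  shows "\<exists>Q d. orthonormal_mat n Q \<and> transpose_mat Q * A * Q = diag_of n d \<and>
    (\<forall>i j. i \<le> j \<and> j < n \<longrightarrow> d j \<le> d i)"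
proof -
  obtain Q d where Q: "orthonormal_mat n Q" and QAQ: "transpose_mat Q * A * Q = diag_of n d"
    using real_symmetric_orthogonally_diagonalizable[OF assms] by blast
  obtain p where p: "p permutes {..<n}" and mono: "\<forall>i j. i \<le> j \<and> j < n \<longrightarrow> d (p j) \<le> d (p i)"
    using permutes_sorting_descending by blast
  have P: "orthonormal_mat n (perm_mat n p :: real mat)"
    using p by (rule orthonormal_perm_mat)
  have "transpose_mat (Q * perm_mat n p) * A * (Q * perm_mat n p)
      = transpose_mat (perm_mat n p) * diag_of n d * perm_mat n p"
    using orthonormal_mat_carrier[OF Q] orthonormal_mat_carrier[OF P] A
    by (simp only: transpose_mult_mult_mult QAQ)
  also have "\<dots> = diag_of n (d \<circ> p)"
  proof (rule eq_matI)
    fix i j assume "i < dim_row (diag_of n (d \<circ> p))" "j < dim_col (diag_of n (d \<circ> p))"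
    then have ij: "i < n" "j < n" by (simp_all add: diag_of_def)
    then show "(transpose_mat (perm_mat n p) * diag_of n d * perm_mat n p) $$ (i, j)
        = diag_of n (d \<circ> p) $$ (i, j)"
      unfolding perm_mat_conj_index[OF p diag_of_carrier ij]
      using ij permutes_in_image[OF p] permutes_inj[OF p] by (simp add: diag_of_def inj_eq)
  qed (simp_all add: diag_of_def perm_mat_def)
  finally show ?thesis
    using orthonormal_mat_mult[OF Q P] mono
    by (intro exI[of _ "Q * perm_mat n p"] exI[of _ "d \<circ> p"]) simp
qed

lemma mult_mat_vec_in_vspan_cols:
  fixes A :: "real mat"
  assumes A: "A \<in> carrier_mat N k" and y: "y \<in> carrier_vec k"
  shows "A *\<^sub>v y \<in> vspan N (set (cols A))"
proof -
  interpret vec_space "TYPE(real)" N .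
  have cols: "set (cols A) \<subseteq> carrier_vec N" using A cols_dim by blast
  have "mat_of_cols N (cols A) = A" "vec k (\<lambda>i. y $ i) = y"
    using A y mat_of_cols_cols[of A] by auto
  then have "A *\<^sub>v y = lincomb_list (\<lambda>i. y $ i) (cols A)"
    using A cols by (subst lincomb_list_as_mat_mult) auto
  then have "A *\<^sub>v y \<in> span_list (cols A)"
    by (intro in_span_listI) simp_all
  then show ?thesis
    unfolding vspan_def span_list_as_span[OF cols] .
qed

lemma vspan_cols_mult_subset:
  fixes A B :: "real mat"
  assumes A: "A \<in> carrier_mat N k" and B: "B \<in> carrier_mat k l"
  shows "vspan N (set (cols (A * B))) \<subseteq> vspan N (set (cols A))"
proof -
  interpret vec_space "TYPE(real)" N .
  have "set (cols A) \<subseteq> carrier_vec N" using A cols_dim by blast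
  moreover have "set (cols (A * B)) \<subseteq> vspan N (set (cols A))"
  proof
    fix v assume "v \<in> set (cols (A * B))"
    then obtain j where "j < l" and "v = col (A * B) j"
      using B by (auto simp: cols_def)
    then have "v = A *\<^sub>v col B j" using col_mult2[OF A B] by simp
    then show "v \<in> vspan N (set (cols A))"
      using A B \<open>j < l\<close> by (simp add: mult_mat_vec_in_vspan_cols)
  qed
  ultimately show ?thesis
    unfolding vspan_def by (rule span_subsetI)
qed

lemma vspan_cols_mult_invertible:
  fixes V Q Q' :: "real mat"
  assumes V: "V \<in> carrier_mat N k" and Q: "Q \<in> carrier_mat k k" and Q': "Q' \<in> carrier_mat k k"
    and inv: "Q * Q' = 1\<^sub>m k"
  shows "vspan N (set (cols (V * Q))) = vspan N (set (cols V))"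
proof
  have "V = V * Q * Q'"
    using V Q Q' by (simp add: inv)
  then show "vspan N (set (cols V)) \<subseteq> vspan N (set (cols (V * Q)))"
    using vspan_cols_mult_subset[of "V * Q" N k Q' k] V Q Q' by simp
qed (rule vspan_cols_mult_subset[OF V Q])

lemma block_index_less: "k < n \<Longrightarrow> a < m \<Longrightarrow> k * m + a < m * (n :: nat)"
proof -
  assume "k < n" "a < m"
  then have "k * m + a < Suc k * m" by simp
  also have "\<dots> \<le> n * m" using \<open>k < n\<close> by (intro mult_le_mono1) simp
  finally show ?thesis by (simp add: mult.commute)
qed

lemma sum_if_div_eq:
  fixes g :: "nat \<Rightarrow> 'a :: comm_monoid_add"
  assumes "k < n"
  shows "(\<Sum>r<m * n. if r div m = k then g r else 0) = (\<Sum>a<m. g (k * m + a))"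
proof -
  have "{r \<in> {..<m * n}. r div m = k} = (\<lambda>a. k * m + a) ` {..<m}"
  proof
    show "{r \<in> {..<m * n}. r div m = k} \<subseteq> (\<lambda>a. k * m + a) ` {..<m}"
    proof
      fix r assume r: "r \<in> {r \<in> {..<m * n}. r div m = k}"
      then have "0 < m" by (cases m) auto
      with r show "r \<in> (\<lambda>a. k * m + a) ` {..<m}"
        by (auto intro!: image_eqI[of _ _ "r mod m"] simp: mult.commute)
    qed
  qed (use assms in \<open>auto simp: block_index_less\<close>)
  then show ?thesis
    by (simp add: sum.inter_filter[symmetric] sum.reindex)
qed

lemma kron_vec_unit_vec_carrier: "y \<in> carrier_vec m \<Longrightarrow> kron_vec (unit_vec n k) y \<in> carrier_vec (m * n)"
  unfolding kron_vec_def by (simp add: mult.commute)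

lemma index_kron_vec_unit_vec:
  assumes "y \<in> carrier_vec m" "r < m * n" "k < n"
  shows "kron_vec (unit_vec n k) y $ r = (if r div m = k then y $ (r mod m) else 0)"
proof -
  have "r div m < n" using assms(2) by (simp add: less_mult_imp_div_less mult.commute)
  then show ?thesis using assms unfolding kron_vec_def by (auto simp: mult.commute)
qed

lemma scalar_prod_kron_vec_unit_vec_left:
  assumes y: "y \<in> carrier_vec m" and z: "z \<in> carrier_vec (m * n)" and k: "k < n"
  shows "kron_vec (unit_vec n k) y \<bullet> z = (\<Sum>a<m. y $ a * z $ (k * m + a))"
proof -
  have "kron_vec (unit_vec n k) y \<bullet> z = (\<Sum>r<m * n. if r div m = k then y $ (r mod m) * z $ r else 0)"
    using y z k unfolding scalar_prod_def
    by (intro sum.cong) (auto simp: index_kron_vec_unit_vec kron_vec_unit_vec_carrier[OF y])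
  also have "\<dots> = (\<Sum>a<m. y $ a * z $ (k * m + a))"
    using k by (subst sum_if_div_eq) simp_all
  finally show ?thesis .
qed

lemma scalar_prod_kron_vec_unit_vec:
  assumes y: "y \<in> carrier_vec m" and y': "y' \<in> carrier_vec m" and "k < n" "l < n"
  shows "kron_vec (unit_vec n k) y \<bullet> kron_vec (unit_vec n l) y' = (if k = l then y \<bullet> y' else 0)"
  using assms unfolding scalar_prod_kron_vec_unit_vec_left[OF y kron_vec_unit_vec_carrier[OF y'] \<open>k < n\<close>]
  by (simp add: index_kron_vec_unit_vec block_index_less scalar_prod_def atLeast0LessThan)

lemma scalar_prod_kron_vec_unit_vec_mult_mat:
  fixes M :: "real mat"
  assumes M: "M \<in> carrier_mat (m * n) (m * n)" and y: "y \<in> carrier_vec m" and y': "y' \<in> carrier_vec m"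
    and k: "k < n" and l: "l < n"
  shows "kron_vec (unit_vec n k) y \<bullet> (M *\<^sub>v kron_vec (unit_vec n l) y') = y \<bullet> (blk M m k l *\<^sub>v y')"
proof -
  have x: "kron_vec (unit_vec n l) y' \<in> carrier_vec (m * n)"
    using y' by (rule kron_vec_unit_vec_carrier)
  have row: "(M *\<^sub>v kron_vec (unit_vec n l) y') $ (k * m + a) = (\<Sum>b<m. y' $ b * M $$ (k * m + a, l * m + b))"
    if a: "a < m" for a
  proof -
    have i: "k * m + a < m * n" using k a by (rule block_index_less)
    have "(M *\<^sub>v kron_vec (unit_vec n l) y') $ (k * m + a) = kron_vec (unit_vec n l) y' \<bullet> row M (k * m + a)"
      using M i x by (simp add: comm_scalar_prod[of _ "m * n"])
    also have "\<dots> = (\<Sum>b<m. y' $ b * row M (k * m + a) $ (l * m + b))"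
      using M i by (intro scalar_prod_kron_vec_unit_vec_left[OF y' _ l]) simp
    also have "\<dots> = (\<Sum>b<m. y' $ b * M $$ (k * m + a, l * m + b))"
      using M i l by (intro sum.cong) (auto simp: block_index_less)
    finally show ?thesis .
  qed
  have "kron_vec (unit_vec n k) y \<bullet> (M *\<^sub>v kron_vec (unit_vec n l) y')
      = (\<Sum>a<m. y $ a * (M *\<^sub>v kron_vec (unit_vec n l) y') $ (k * m + a))"
    using M x by (intro scalar_prod_kron_vec_unit_vec_left[OF y _ k] mult_mat_vec_carrier)
  also have "\<dots> = (\<Sum>a<m. y $ a * (\<Sum>b<m. y' $ b * M $$ (k * m + a, l * m + b)))"
    by (simp add: row)
  also have "\<dots> = y \<bullet> (blk M m k l *\<^sub>v y')"
    using y y' by (simp add: scalar_prod_def atLeast0LessThan blk_def mult.commute)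
  finally show ?thesis .
qed

text \<open>Column s is e_(s mod n) (x) h_(s div n), where h_j is column j of H. Up to a permutation
  of the columns this is I_n (x) H; the order puts the n columns built from h_(m-1) last.\<close>

definition kron_basis_mat :: "nat \<Rightarrow> nat \<Rightarrow> real mat \<Rightarrow> real mat" where
  "kron_basis_mat m n H =
     mat (m * n) (m * n) (\<lambda>(r, s). kron_vec (unit_vec n (s mod n)) (col H (s div n)) $ r)"

lemma kron_basis_mat_carrier: "kron_basis_mat m n H \<in> carrier_mat (m * n) (m * n)"
  unfolding kron_basis_mat_def by simp

lemma col_kron_basis_mat:
  assumes H: "H \<in> carrier_mat m m" and s: "s < m * n"
  shows "col (kron_basis_mat m n H) s = kron_vec (unit_vec n (s mod n)) (col H (s div n))"
proof -
  have "s div n < m" using s by (simp add: less_mult_imp_div_less)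
  then have "kron_vec (unit_vec n (s mod n)) (col H (s div n)) \<in> carrier_vec (m * n)"
    using H by (intro kron_vec_unit_vec_carrier) simp
  then show ?thesis
    using s unfolding kron_basis_mat_def by (auto intro!: eq_vecI)
qed

lemma kron_basis_mat_conj_index:
  assumes H: "H \<in> carrier_mat m m" and M: "M \<in> carrier_mat (m * n) (m * n)"
    and s: "s < m * n" and t: "t < m * n"
  shows "(transpose_mat (kron_basis_mat m n H) * M * kron_basis_mat m n H) $$ (s, t)
    = col H (s div n) \<bullet> (blk M m (s mod n) (t mod n) *\<^sub>v col H (t div n))"
proof -
  have "0 < n" using s by (cases n) auto
  moreover have "s div n < m" "t div n < m"
    using s t by (simp_all add: less_mult_imp_div_less)
  ultimately show ?thesis
    using H
    unfolding transpose_mult_mult_index[OF kron_basis_mat_carrier M s t]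
      col_kron_basis_mat[OF H s] col_kron_basis_mat[OF H t]
    by (intro scalar_prod_kron_vec_unit_vec_mult_mat[OF M]) simp_all
qed

lemma orthonormal_kron_basis_mat:
  assumes H: "orthonormal_mat m H"
  shows "orthonormal_mat (m * n) (kron_basis_mat m n H)"
proof (rule orthonormal_matI_cols[OF kron_basis_mat_carrier])
  fix s t assume s: "s < m * n" and t: "t < m * n"
  have Hc: "H \<in> carrier_mat m m" using H by (rule orthonormal_mat_carrier)
  have "0 < n" using s by (cases n) auto
  moreover have "s div n < m" "t div n < m"
    using s t by (simp_all add: less_mult_imp_div_less)
  ultimately have "col (kron_basis_mat m n H) s \<bullet> col (kron_basis_mat m n H) t
      = (if s mod n = t mod n \<and> s div n = t div n then 1 else 0)"
    using Hc unfolding col_kron_basis_mat[OF Hc s] col_kron_basis_mat[OF Hc t]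
    by (simp add: scalar_prod_kron_vec_unit_vec[of _ m] orthonormal_mat_col_scalar_prod[OF H])
  also have "(s mod n = t mod n \<and> s div n = t div n) \<longleftrightarrow> s = t"
    by (metis div_mult_mod_eq)
  finally show "col (kron_basis_mat m n H) s \<bullet> col (kron_basis_mat m n H) t = (if s = t then 1 else 0)" .
qed

lemma ones_vec_carrier [simp]: "ones_vec m \<in> carrier_vec m"
  unfolding ones_vec_def by simp

definition centering_mat :: "nat \<Rightarrow> real mat" where
  "centering_mat m = (1 / real m) \<cdot>\<^sub>m 1\<^sub>m m - (1 / (real m)^2) \<cdot>\<^sub>m mat m m (\<lambda>_. 1)"

lemma centering_mat_mult_vec:
  assumes y: "y \<in> carrier_vec m"
  shows "centering_mat m *\<^sub>v y = (1 / real m) \<cdot>\<^sub>v y - ((ones_vec m \<bullet> y) / (real m)^2) \<cdot>\<^sub>v ones_vec m"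
proof (rule eq_vecI)
  fix i assume "i < dim_vec ((1 / real m) \<cdot>\<^sub>v y - ((ones_vec m \<bullet> y) / (real m)^2) \<cdot>\<^sub>v ones_vec m)"
  then have i: "i < m" using y by (simp add: ones_vec_def)
  have "(centering_mat m *\<^sub>v y) $ i = (\<Sum>j<m. ((if i = j then 1 else 0) / real m - 1 / (real m)^2) * y $ j)"
    using i y by (simp add: centering_mat_def scalar_prod_def atLeast0LessThan)
  also have "\<dots> = (\<Sum>j<m. (if i = j then y $ j / real m else 0) - y $ j / (real m)^2)"
    by (intro sum.cong) (auto simp: algebra_simps)
  also have "\<dots> = y $ i / real m - (\<Sum>j<m. y $ j) / (real m)^2"
    using i by (simp add: sum_subtractf sum_divide_distrib)
  finally show "(centering_mat m *\<^sub>v y) $ i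
      = ((1 / real m) \<cdot>\<^sub>v y - ((ones_vec m \<bullet> y) / (real m)^2) \<cdot>\<^sub>v ones_vec m) $ i"
    using i y by (simp add: ones_vec_def scalar_prod_def atLeast0LessThan)
qed (simp add: centering_mat_def ones_vec_def)

lemma Lambda_mat_carrier: "Lambda_mat n m \<in> carrier_mat (m * n) (m * n)"
  unfolding Lambda_mat_def kron_mat_def by (simp add: mult.commute)

lemma blk_Lambda_mat:
  assumes "k < n" "l < n"
  shows "blk (Lambda_mat n m) m k l = (if k = l then centering_mat m else 0\<^sub>m m m)"
  using assms
  by (intro eq_matI)
    (auto simp: blk_def Lambda_mat_def kron_mat_def centering_mat_def block_index_less mult.commute)

section \<open>Kronecker bases adapted to the all-ones vector\<close>

locale ones_last_basis =
  fixes m :: nat and H :: "real mat"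
  assumes m_pos: "0 < m" and orthonormal_H: "orthonormal_mat m H"
    and col_H_last: "col H (m - 1) = (1 / sqrt m) \<cdot>\<^sub>v ones_vec m"
begin

lemma H_carrier: "H \<in> carrier_mat m m"
  using orthonormal_H by (rule orthonormal_mat_carrier)

lemma last_index_less: "m - 1 < m"
  using m_pos by simp

lemma mult_n_eq: "m * n = (m - 1) * n + n"
  using m_pos by (cases m) simp_all

lemma ones_vec_scalar_prod_col:
  assumes "j < m"
  shows "ones_vec m \<bullet> col H j = (if j = m - 1 then sqrt m else 0)"
proof -
  have "ones_vec m = sqrt m \<cdot>\<^sub>v col H (m - 1)"
    using m_pos unfolding col_H_last by (auto intro!: eq_vecI simp: ones_vec_def)
  then show ?thesis
    using assms H_carrier last_index_less by (simp add: orthonormal_mat_col_scalar_prod[OF orthonormal_H])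
qed

lemma col_scalar_prod_centering_mat:
  assumes i: "i < m" and j: "j < m"
  shows "col H i \<bullet> (centering_mat m *\<^sub>v col H j) = (if i = j \<and> j \<noteq> m - 1 then 1 / real m else 0)"
proof -
  have cols: "col H i \<in> carrier_vec m" "col H j \<in> carrier_vec m"
    using i j H_carrier by simp_all
  have "col H i \<bullet> (centering_mat m *\<^sub>v col H j)
      = (col H i \<bullet> col H j) / real m - (ones_vec m \<bullet> col H j) * (ones_vec m \<bullet> col H i) / (real m)^2"
    using cols by (simp add: centering_mat_mult_vec scalar_prod_minus_distrib[of _ m]
        comm_scalar_prod[of "col H i" m "ones_vec m"])
  then show ?thesis
    using i j m_pos
    by (simp add: ones_vec_scalar_prod_col orthonormal_mat_col_scalar_prod[OF orthonormal_H] power2_eq_square)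
qed

lemma kron_basis_mat_conj_Lambda_mat:
  "transpose_mat (kron_basis_mat m n H) * Lambda_mat n m * kron_basis_mat m n H
    = (1 / real m) \<cdot>\<^sub>m diag_of (m * n) (\<lambda>s. if s < (m - 1) * n then 1 else 0)"
proof (rule eq_matI)
  fix s t assume "s < dim_row ((1 / real m) \<cdot>\<^sub>m diag_of (m * n) (\<lambda>s. if s < (m - 1) * n then 1 else 0))"
    "t < dim_col ((1 / real m) \<cdot>\<^sub>m diag_of (m * n) (\<lambda>s. if s < (m - 1) * n then 1 else 0))"
  then have s: "s < m * n" and t: "t < m * n" by (simp_all add: diag_of_def)
  have "0 < n" using s by (cases n) auto
  have div: "s div n < m" "t div n < m" "s mod n < n" "t mod n < n"
    using s t \<open>0 < n\<close> by (simp_all add: less_mult_imp_div_less)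
  have last: "s div n \<noteq> m - 1 \<longleftrightarrow> s < (m - 1) * n"
    using div(1) \<open>0 < n\<close> div_less_iff_less_mult[of n s "m - 1"] by linarith
  have "(transpose_mat (kron_basis_mat m n H) * Lambda_mat n m * kron_basis_mat m n H) $$ (s, t)
      = col H (s div n) \<bullet> ((if s mod n = t mod n then centering_mat m else 0\<^sub>m m m) *\<^sub>v col H (t div n))"
    unfolding kron_basis_mat_conj_index[OF H_carrier Lambda_mat_carrier s t] blk_Lambda_mat[OF div(3,4)] ..
  also have "\<dots> = (if s = t \<and> s < (m - 1) * n then 1 / real m else 0)"
  proof (cases "s mod n = t mod n")
    case True
    moreover have "s div n = t div n \<longleftrightarrow> s = t"
      using True by (metis div_mult_mod_eq)
    ultimately show ?thesis
      using div last by (auto simp: col_scalar_prod_centering_mat)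
  next
    case False
    have "0\<^sub>m m m *\<^sub>v col H (t div n) = 0\<^sub>v m"
      using H_carrier by (intro eq_vecI) (simp_all add: scalar_prod_def)
    with False show ?thesis
      using div H_carrier by auto
  qed
  finally show "(transpose_mat (kron_basis_mat m n H) * Lambda_mat n m * kron_basis_mat m n H) $$ (s, t)
      = ((1 / real m) \<cdot>\<^sub>m diag_of (m * n) (\<lambda>s. if s < (m - 1) * n then 1 else 0)) $$ (s, t)"
    using s t by (simp add: diag_of_def)
qed (simp_all add: diag_of_def kron_basis_mat_def)

lemma kron_basis_mat_conj_upper_right:
  assumes W: "W \<in> carrier_mat (m * n) (m * n)"
    and A2: "\<forall>k<n. \<forall>l<n. blk W m k l *\<^sub>v ones_vec m = lam k l \<cdot>\<^sub>v ones_vec m"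
    and s: "s < (m - 1) * n" and t: "(m - 1) * n \<le> t" "t < m * n"
  shows "(transpose_mat (kron_basis_mat m n H) * W * kron_basis_mat m n H) $$ (s, t) = 0"
proof -
  have "0 < n" using t by (cases n) auto
  have s': "s < m * n" using s t by linarith
  have "t div n = m - 1"
    using t m_pos by (intro div_nat_eqI) (simp_all add: mult.commute)
  moreover have "s div n < m - 1"
    using s \<open>0 < n\<close> by (simp add: less_mult_imp_div_less)
  moreover have "s mod n < n" "t mod n < n" using \<open>0 < n\<close> by simp_all
  \<comment> \<open>by (A2), as the last column of H is a multiple of the all-ones vector\<close>
  moreover have "blk W m k l *\<^sub>v col H (m - 1) = lam k l \<cdot>\<^sub>v col H (m - 1)" if "k < n" "l < n" for k l
    using A2 that unfolding col_H_last
    by (simp add: mult_mat_vec[of _ m m] blk_def smult_smult_assoc mult.commute)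
  ultimately show ?thesis
    unfolding kron_basis_mat_conj_index[OF H_carrier W s' t(2)]
    using H_carrier last_index_less by (simp add: orthonormal_mat_col_scalar_prod[OF orthonormal_H])
qed

lemma kron_basis_mat_conj_block_diag:
  assumes W: "W \<in> carrier_mat (m * n) (m * n)" and sym: "transpose_mat W = W"
    and A2: "\<forall>k<n. \<forall>l<n. blk W m k l *\<^sub>v ones_vec m = lam k l \<cdot>\<^sub>v ones_vec m"
  shows "\<exists>A B. A \<in> carrier_mat ((m - 1) * n) ((m - 1) * n) \<and> B \<in> carrier_mat n n \<and>
    transpose_mat A = A \<and> transpose_mat B = B \<and>
    transpose_mat (kron_basis_mat m n H) * W * kron_basis_mat m n H = block_diag_mat A B"
proof (rule symmetric_mat_block_diag_split)
  show "transpose_mat (kron_basis_mat m n H) * W * kron_basis_mat m n H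
      \<in> carrier_mat ((m - 1) * n + n) ((m - 1) * n + n)"
    unfolding mult_n_eq[symmetric] using W kron_basis_mat_carrier[of m n H] by simp
  show "transpose_mat (transpose_mat (kron_basis_mat m n H) * W * kron_basis_mat m n H)
      = transpose_mat (kron_basis_mat m n H) * W * kron_basis_mat m n H"
    using kron_basis_mat_carrier W sym by (rule transpose_mult_mult_symmetric)
qed (use kron_basis_mat_conj_upper_right[OF W A2] mult_n_eq in simp)

lemma kron_basis_mat_mult_block_diag_conj_Lambda_mat:
  assumes Q1: "orthonormal_mat ((m - 1) * n) Q1" and Q2: "Q2 \<in> carrier_mat n n"
  defines "P \<equiv> kron_basis_mat m n H * block_diag_mat Q1 Q2"
  shows "transpose_mat P * Lambda_mat n m * P
    = (1 / real m) \<cdot>\<^sub>m diag_of (m * n) (\<lambda>i. if i < (m - 1) * n then 1 else 0)"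
proof -
  define R where "R = block_diag_mat Q1 Q2"
  define D where "D = diag_of (m * n) (\<lambda>i. if i < (m - 1) * n then (1 :: real) else 0)"
  have R: "R \<in> carrier_mat (m * n) (m * n)"
    unfolding R_def mult_n_eq[of n] using orthonormal_mat_carrier[OF Q1] Q2 by (rule block_diag_mat_carrier)
  have "transpose_mat P * Lambda_mat n m * P
      = transpose_mat R * (transpose_mat (kron_basis_mat m n H) * Lambda_mat n m * kron_basis_mat m n H) * R"
    unfolding P_def R_def[symmetric] using kron_basis_mat_carrier R Lambda_mat_carrier
    by (rule transpose_mult_mult_mult)
  also have "\<dots> = (1 / real m) \<cdot>\<^sub>m (transpose_mat R * D * R)"
    unfolding kron_basis_mat_conj_Lambda_mat D_def[symmetric] using R
    by (simp add: mult_smult_distrib[of _ "m * n" "m * n" _ "m * n"]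
        mult_smult_assoc_mat[of _ "m * n" "m * n" _ "m * n"] D_def)
  also have "transpose_mat R * D * R = D"
    using orthonormal_block_diag_mat_conj_first_coords[OF Q1 Q2, folded mult_n_eq[of n] R_def]
    unfolding D_def .
  finally show ?thesis unfolding D_def .
qed

lemma col_kron_basis_mat_last:
  assumes k: "k < n"
  shows "col (kron_basis_mat m n H) ((m - 1) * n + k) = (1 / sqrt m) \<cdot>\<^sub>v kron_vec (unit_vec n k) (ones_vec m)"
proof -
  have s: "(m - 1) * n + k < m * n"
    using k mult_n_eq[of n] by linarith
  have "((m - 1) * n + k) mod n = k" "((m - 1) * n + k) div n = m - 1"
    using k by simp_all
  then show ?thesis
    unfolding col_kron_basis_mat[OF H_carrier s] using H_carrier col_H_last m_pos
    by (auto intro!: eq_vecI simp: kron_vec_def ones_vec_def)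
qed

lemma vspan_last_cols_kron_basis_mat_mult:
  assumes Q1: "Q1 \<in> carrier_mat ((m - 1) * n) ((m - 1) * n)" and Q2: "orthonormal_mat n Q2"
  shows "vspan (m * n) {col (kron_basis_mat m n H * block_diag_mat Q1 Q2) ((m - 1) * n + k) | k. k < n}
    = vspan (m * n) {kron_vec (unit_vec n k) (ones_vec m) | k. k < n}"
proof -
  define E where "E = mat (m * n) n (\<lambda>(r, k). kron_vec (unit_vec n k) (ones_vec m) $ r)"
  have E: "E \<in> carrier_mat (m * n) n" unfolding E_def by simp
  have Q2c: "Q2 \<in> carrier_mat n n" using Q2 by (rule orthonormal_mat_carrier)
  have kron: "kron_vec (unit_vec n k) (ones_vec m) \<in> carrier_vec (m * n)" for k
    by (rule kron_vec_unit_vec_carrier) simp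
  have col_E: "col E k = kron_vec (unit_vec n k) (ones_vec m)" if "k < n" for k
    using that kron[of k] unfolding E_def by (auto intro!: eq_vecI)
  have "mat (m * n) n (\<lambda>(r, i). kron_basis_mat m n H $$ (r, (m - 1) * n + i)) = (1 / sqrt m) \<cdot>\<^sub>m E"
  proof (rule eq_matI)
    fix r i assume "r < dim_row ((1 / sqrt m) \<cdot>\<^sub>m E)" "i < dim_col ((1 / sqrt m) \<cdot>\<^sub>m E)"
    then have ri: "r < m * n" "i < n" using E by simp_all
    then have "(m - 1) * n + i < m * n" using mult_n_eq[of n] by linarith
    then have "kron_basis_mat m n H $$ (r, (m - 1) * n + i) = col (kron_basis_mat m n H) ((m - 1) * n + i) $ r"
      using ri kron_basis_mat_carrier[of m n H] by simp
    also have "\<dots> = ((1 / sqrt m) \<cdot>\<^sub>v kron_vec (unit_vec n i) (ones_vec m)) $ r"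
      unfolding col_kron_basis_mat_last[OF ri(2)] ..
    also have "\<dots> = ((1 / sqrt m) \<cdot>\<^sub>m E) $$ (r, i)"
      using ri kron[of i] by (simp add: E_def)
    finally show "mat (m * n) n (\<lambda>(r, i). kron_basis_mat m n H $$ (r, (m - 1) * n + i)) $$ (r, i)
        = ((1 / sqrt m) \<cdot>\<^sub>m E) $$ (r, i)"
      using ri by simp
  qed (use E in simp_all)
  note last_cols = this
  have U: "kron_basis_mat m n H \<in> carrier_mat ((m - 1) * n + n) ((m - 1) * n + n)"
    unfolding mult_n_eq[symmetric] by (rule kron_basis_mat_carrier)
  have "col (kron_basis_mat m n H * block_diag_mat Q1 Q2) ((m - 1) * n + k)
      = col (E * ((1 / sqrt m) \<cdot>\<^sub>m Q2)) k" if k: "k < n" for k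
  proof -
    have "col (kron_basis_mat m n H * block_diag_mat Q1 Q2) ((m - 1) * n + k)
        = mat (m * n) n (\<lambda>(r, i). kron_basis_mat m n H $$ (r, (m - 1) * n + i)) *\<^sub>v col Q2 k"
      using col_mult_block_diag_mat_right[OF U Q1 Q2c k] unfolding mult_n_eq[symmetric] .
    also have "\<dots> = col (E * ((1 / sqrt m) \<cdot>\<^sub>m Q2)) k"
      unfolding last_cols using E Q2c k
      by (simp add: mult_mat_vec smult_mat_mult_vec col_mult2[of E "m * n" n _ n])
    finally show ?thesis .
  qed
  then have "(\<lambda>k. col (kron_basis_mat m n H * block_diag_mat Q1 Q2) ((m - 1) * n + k)) ` {..<n}
      = col (E * ((1 / sqrt m) \<cdot>\<^sub>m Q2)) ` {..<n}"
    by (intro image_cong) simp_all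
  then have "{col (kron_basis_mat m n H * block_diag_mat Q1 Q2) ((m - 1) * n + k) | k. k < n}
      = col (E * ((1 / sqrt m) \<cdot>\<^sub>m Q2)) ` {..<n}"
    by blast
  also have "\<dots> = set (cols (E * ((1 / sqrt m) \<cdot>\<^sub>m Q2)))"
    using E Q2c by (simp add: cols_def atLeast0LessThan)
  finally have last: "{col (kron_basis_mat m n H * block_diag_mat Q1 Q2) ((m - 1) * n + k) | k. k < n}
      = set (cols (E * ((1 / sqrt m) \<cdot>\<^sub>m Q2)))" .
  have "{kron_vec (unit_vec n k) (ones_vec m) | k. k < n} = col E ` {..<n}"
    using col_E by (auto simp: image_iff)
  also have "\<dots> = set (cols E)"
    using E by (simp add: cols_def atLeast0LessThan)
  finally have "{kron_vec (unit_vec n k) (ones_vec m) | k. k < n} = set (cols E)" .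
  have inv: "(1 / sqrt m) \<cdot>\<^sub>m Q2 * (sqrt m \<cdot>\<^sub>m transpose_mat Q2) = 1\<^sub>m n"
    using Q2c m_pos
    by (simp add: mult_smult_distrib[of _ n n _ n] mult_smult_assoc_mat[of _ n n _ n]
        orthonormal_mat_mult_transpose[OF Q2])
    (auto intro!: eq_matI)
  show ?thesis
    unfolding last \<open>{kron_vec (unit_vec n k) (ones_vec m) | k. k < n} = set (cols E)\<close>
    by (rule vspan_cols_mult_invertible[OF E _ _ inv]) (use Q2c in simp_all)
qed

lemma simultaneous_orthonormal_diagonalization:
  assumes W: "W \<in> carrier_mat (m * n) (m * n)" and sym: "transpose_mat W = W"
    and A2: "\<forall>k<n. \<forall>l<n. blk W m k l *\<^sub>v ones_vec m = lam k l \<cdot>\<^sub>v ones_vec m"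
  shows "\<exists>P \<mu>. orthonormal_mat (m * n) P \<and>
    vspan (m * n) {col P ((m - 1) * n + k) | k. k < n}
      = vspan (m * n) {kron_vec (unit_vec n k) (ones_vec m) | k. k < n} \<and>
    transpose_mat P * Lambda_mat n m * P
      = (1 / real m) \<cdot>\<^sub>m diag_of (m * n) (\<lambda>i. if i < (m - 1) * n then 1 else 0) \<and>
    transpose_mat P * W * P = diag_of (m * n) \<mu> \<and>
    (\<forall>i j. i \<le> j \<and> j < (m - 1) * n \<longrightarrow> \<mu> j \<le> \<mu> i) \<and>
    (\<forall>i j. (m - 1) * n \<le> i \<and> i \<le> j \<and> j < m * n \<longrightarrow> \<mu> j \<le> \<mu> i)"
proof -
  define U where "U = kron_basis_mat m n H"
  obtain A B where A: "A \<in> carrier_mat ((m - 1) * n) ((m - 1) * n)" and B: "B \<in> carrier_mat n n"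
    and "transpose_mat A = A" "transpose_mat B = B" and UWU: "transpose_mat U * W * U = block_diag_mat A B"
    using kron_basis_mat_conj_block_diag[OF W sym A2] unfolding U_def by blast
  obtain Q1 d1 where Q1: "orthonormal_mat ((m - 1) * n) Q1" and QAQ: "transpose_mat Q1 * A * Q1 = diag_of ((m - 1) * n) d1"
    and d1: "\<forall>i j. i \<le> j \<and> j < (m - 1) * n \<longrightarrow> d1 j \<le> d1 i"
    using real_symmetric_orthogonally_diagonalizable_sorted[OF A \<open>transpose_mat A = A\<close>] by blast
  obtain Q2 d2 where Q2: "orthonormal_mat n Q2" and QBQ: "transpose_mat Q2 * B * Q2 = diag_of n d2"
    and d2: "\<forall>i j. i \<le> j \<and> j < n \<longrightarrow> d2 j \<le> d2 i"
    using real_symmetric_orthogonally_diagonalizable_sorted[OF B \<open>transpose_mat B = B\<close>] by blast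
  define R where "R = block_diag_mat Q1 Q2"
  have R: "orthonormal_mat (m * n) R"
    unfolding R_def mult_n_eq[of n] by (rule orthonormal_block_diag_mat[OF Q1 Q2])
  have U: "orthonormal_mat (m * n) U"
    unfolding U_def by (rule orthonormal_kron_basis_mat[OF orthonormal_H])
  have Uc: "U \<in> carrier_mat (m * n) (m * n)" and Rc: "R \<in> carrier_mat (m * n) (m * n)"
    using U R by (simp_all add: orthonormal_mat_carrier)
  define \<mu> where "\<mu> i = (if i < (m - 1) * n then d1 i else d2 (i - (m - 1) * n))" for i
  have "transpose_mat (U * R) * W * (U * R) = transpose_mat R * block_diag_mat A B * R"
    using transpose_mult_mult_mult[OF Uc Rc W] unfolding UWU .
  also have "\<dots> = block_diag_mat (diag_of ((m - 1) * n) d1) (diag_of n d2)"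
    unfolding R_def QAQ[symmetric] QBQ[symmetric]
    by (rule block_diag_mat_conj[where k = "(m - 1) * n" and l = n])
      (use Q1 Q2 A B in \<open>simp_all add: orthonormal_mat_carrier\<close>)
  also have "\<dots> = diag_of (m * n) \<mu>"
    unfolding block_diag_mat_diag_of mult_n_eq[of n] \<mu>_def ..
  finally have PWP: "transpose_mat (U * R) * W * (U * R) = diag_of (m * n) \<mu>" .
  have PLP: "transpose_mat (U * R) * Lambda_mat n m * (U * R)
      = (1 / real m) \<cdot>\<^sub>m diag_of (m * n) (\<lambda>i. if i < (m - 1) * n then 1 else 0)"
    unfolding U_def R_def using Q1 orthonormal_mat_carrier[OF Q2]
    by (rule kron_basis_mat_mult_block_diag_conj_Lambda_mat)
  have span: "vspan (m * n) {col (U * R) ((m - 1) * n + k) | k. k < n}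
      = vspan (m * n) {kron_vec (unit_vec n k) (ones_vec m) | k. k < n}"
    unfolding U_def R_def using orthonormal_mat_carrier[OF Q1] Q2
    by (rule vspan_last_cols_kron_basis_mat_mult)
  have "\<forall>i j. (m - 1) * n \<le> i \<and> i \<le> j \<and> j < m * n \<longrightarrow> \<mu> j \<le> \<mu> i"
    using d2 mult_n_eq[of n] unfolding \<mu>_def by (auto simp: diff_le_mono)
  then show ?thesis
    using orthonormal_mat_mult[OF U R] PWP PLP span d1
    by (intro exI[of _ "U * R"] exI[of _ \<mu>]) (simp add: \<mu>_def)
qed

end

lemma ones_last_basis_exists:
  assumes "0 < m"
  shows "\<exists>H. ones_last_basis m H"
proof -
  define u where "u = (1 / sqrt m) \<cdot>\<^sub>v ones_vec m"
  have "u \<in> carrier_vec m" and "u \<bullet> u = 1"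
    using assms unfolding u_def by (simp_all add: ones_vec_def scalar_prod_def)
  then obtain H where "orthonormal_mat m H" "col H (m - 1) = u"
    using orthonormal_mat_with_col[of u m "m - 1"] assms by auto
  then show ?thesis
    using assms by (intro exI[of _ H]) (unfold_locales, simp_all add: u_def)
qed

theorem lemma2:
  fixes n m :: nat and W :: "real mat" and lam :: "nat \<Rightarrow> nat \<Rightarrow> real"
  assumes n: "n \<ge> 1" and m: "m \<ge> 2"
    and W: "W \<in> carrier_mat (m * n) (m * n)"
    and S: "\<forall>i<n. blk W m i i = 0\<^sub>m m m"
    and A1: "transpose_mat W = W"
    and A2: "\<forall>i<n. \<forall>k<n. blk W m i k *\<^sub>v ones_vec m = lam i k \<cdot>\<^sub>v ones_vec m"
    and A3: "\<forall>i<n. \<forall>k<n. lam i k = lam k i"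
  shows "\<exists>P \<mu>.
     P \<in> carrier_mat (m * n) (m * n) \<and> transpose_mat P * P = 1\<^sub>m (m * n) \<and>
     \<comment> \<open>(i)\<close>
     vspan (m * n) {col P ((m - 1) * n + k) | k. k < n}
       = vspan (m * n) {kron_vec (unit_vec n k) (ones_vec m) | k. k < n} \<and>
     \<comment> \<open>(ii)\<close>
     transpose_mat P * W * Lambda_mat n m * P
       = (1 / real m) \<cdot>\<^sub>m diag_of (m * n) (\<lambda>i. if i < (m - 1) * n then \<mu> i else 0) \<and>
     \<comment> \<open>(iii)\<close>
     transpose_mat P * Lambda_mat n m * P
       = (1 / real m) \<cdot>\<^sub>m diag_of (m * n) (\<lambda>i. if i < (m - 1) * n then 1 else 0) \<and>
     \<comment> \<open>(iv)\<close>
     transpose_mat P * W * P = diag_of (m * n) \<mu> \<and>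
     \<comment> \<open>description of the \<mu>'s\<close>
     (\<forall>i j. i \<le> j \<and> j < (m - 1) * n \<longrightarrow> \<mu> j \<le> \<mu> i) \<and>
     (\<forall>i j. (m - 1) * n \<le> i \<and> i \<le> j \<and> j < m * n \<longrightarrow> \<mu> j \<le> \<mu> i) \<and>
     eigvals_mset (W * Lambda_mat n m)
       (image_mset (\<lambda>i. \<mu> i / real m) (mset_set {..<(m - 1) * n}) + replicate_mset n 0) \<and>
     eigvals_mset W (image_mset \<mu> (mset_set {..<m * n}))"
proof -
  obtain H where "ones_last_basis m H"
    using ones_last_basis_exists[of m] m by force
  then interpret ones_last_basis m H .
  obtain P \<mu> where P: "orthonormal_mat (m * n) P" and span: "vspan (m * n) {col P ((m - 1) * n + k) | k. k < n}
      = vspan (m * n) {kron_vec (unit_vec n k) (ones_vec m) | k. k < n}"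
    and PLP: "transpose_mat P * Lambda_mat n m * P
      = (1 / real m) \<cdot>\<^sub>m diag_of (m * n) (\<lambda>i. if i < (m - 1) * n then 1 else 0)"
    and PWP: "transpose_mat P * W * P = diag_of (m * n) \<mu>" and sorted:
      "\<forall>i j. i \<le> j \<and> j < (m - 1) * n \<longrightarrow> \<mu> j \<le> \<mu> i"
      "\<forall>i j. (m - 1) * n \<le> i \<and> i \<le> j \<and> j < m * n \<longrightarrow> \<mu> j \<le> \<mu> i"
    using simultaneous_orthonormal_diagonalization[OF W A1 A2] by blast
  have Pc: "P \<in> carrier_mat (m * n) (m * n)" using P by (rule orthonormal_mat_carrier)
  have PWLP: "transpose_mat P * (W * Lambda_mat n m) * P
      = diag_of (m * n) (\<lambda>i. if i < (m - 1) * n then \<mu> i / real m else 0)"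
    unfolding orthonormal_conj_mult[OF P W Lambda_mat_carrier] PWP PLP
      mult_smult_distrib[OF diag_of_carrier diag_of_carrier] diag_of_mult
    by (auto intro!: eq_matI simp: diag_of_def)
  have eig: "eigvals_mset (W * Lambda_mat n m)
      (image_mset (\<lambda>i. \<mu> i / real m) (mset_set {..<(m - 1) * n}) + replicate_mset n 0)"
    using eigvals_mset_orthonormal_conj_diag_of[OF P _ PWLP] W Lambda_mat_carrier[of n m]
    unfolding mult_n_eq[of n] image_mset_lessThan_add_zeros by simp
  have "transpose_mat P * W * Lambda_mat n m * P = transpose_mat P * (W * Lambda_mat n m) * P"
    using Pc W Lambda_mat_carrier[of n m] by simp
  then have PWLP': "transpose_mat P * W * Lambda_mat n m * P
      = (1 / real m) \<cdot>\<^sub>m diag_of (m * n) (\<lambda>i. if i < (m - 1) * n then \<mu> i else 0)"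
    unfolding PWLP by (auto intro!: eq_matI simp: diag_of_def)
  show ?thesis
    using P span PWLP' PLP PWP sorted eig eigvals_mset_orthonormal_conj_diag_of[OF P W PWP]
    unfolding orthonormal_mat_def by blast
qed

end
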